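(* For every integer $d\ge 3$, $\lambda(d,2^{d-3})\ge 1-\dfrac{3^d-2}{7^{d-1}}$.
   Context: A $d$-subcube of $\{0,1\}^n$ is a set $C\subseteq\{0,1\}^n$ obtained by fixing $n-d$ coordinates to constant values and letting the remaining $d$ coordinates vary arbitrarily; there are $\binom nd 2^{n-d}$ of them. For integers $0\le s\le 2^d$ and $S\subseteq\{0,1\}^n$, let $\Lambda(S,d,s)$ be the number of $d$-subcubes $C$ with $|S\cap C|=s$, let $\Lambda(n,d,s)=\max\{\Lambda(S,d,s): S\subseteq\{0,1\}^n\}$ for $n\ge d$, and let $\lambda(d,s)=\lim_{n\to\infty}\Lambda(n,d,s)/\big(\binom nd 2^{n-d}\big)$ (the limit exists since the ratio is non-increasing in $n$). *)

theory Defs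
  imports "HOL-Analysis.Analysis"
begin

definition hcube :: "nat \<Rightarrow> (nat \<Rightarrow> bool) set" where
  "hcube n = {x. \<forall>i. n \<le> i \<longrightarrow> \<not> x i}"

definition subcubes :: "nat \<Rightarrow> nat \<Rightarrow> (nat \<Rightarrow> bool) set set" where
  "subcubes n d = {C. \<exists>D a. D \<subseteq> {..<n} \<and> card D = d \<and> a \<in> hcube n \<and>
       C = {x \<in> hcube n. \<forall>i\<in>{..<n} - D. x i = a i}}"

definition Lambda_S :: "nat \<Rightarrow> (nat \<Rightarrow> bool) set \<Rightarrow> nat \<Rightarrow> nat \<Rightarrow> nat" where
  "Lambda_S n S d s = card {C \<in> subcubes n d. card (S \<inter> C) = s}"

definition Lambda :: "nat \<Rightarrow> nat \<Rightarrow> nat \<Rightarrow> nat" where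
  "Lambda n d s = Max {Lambda_S n S d s | S. S \<subseteq> hcube n}"

definition lambda_dens :: "nat \<Rightarrow> nat \<Rightarrow> real" where
  "lambda_dens d s = lim (\<lambda>n. real (Lambda n d s) / (real (n choose d) * 2 ^ (n - d)))"

end

theory Submission
  imports Defs "HOL-Library.Z2" "HOL-Library.Product_Plus"
begin

(*
  Label the coordinates by nonzero vectors v_1, ..., v_n of F_2^3 and let S be the set of points x
  with sum {v_i | x_i = 1} = 0. If the labels of the free coordinates of a d-subcube span F_2^3,
  then W |-> sum {v_i | i in W} maps the subsets W of the free coordinates onto F_2^3 with all
  fibres of size 2^(d-3), so the subcube meets S in exactly 2^(d-3) points.
  For a fixed d-set D, at most (7 * 3^d - 14) * 7^(n-d) of the 7^n labellings fail to span on D: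
  each of the seven planes of F_2^3 contains the labels on D for 3^d * 7^(n-d) labellings, and the
  7 * 7^(n-d) labellings that are constant on D are counted three times. Averaging over all
  labellings gives Lambda(n, d, 2^(d-3)) >= (1 - (3^d - 2) / 7^(d-1)) * C(n,d) * 2^(n-d) for n >= d.
  The density is non-increasing in n, because every d-subcube of the (n+1)-cube lies in n+1-d of
  its 2(n+1) facets, each a copy of the n-cube; so it converges and the bound passes to the limit.
*)

section \<open>Subcubes and their parameters\<close>

definition cube :: "nat \<Rightarrow> nat set \<times> (nat \<Rightarrow> bool) \<Rightarrow> (nat \<Rightarrow> bool) set" where
  "cube n p = {x \<in> hcube n. \<forall>i\<in>{..<n} - fst p. x i = snd p i}"

text \<open>Base points are normalised to vanish on the free coordinates \<open>D\<close>, so that every subcube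
  has exactly one parameter pair.\<close>

definition cube_params :: "nat \<Rightarrow> nat \<Rightarrow> (nat set \<times> (nat \<Rightarrow> bool)) set" where
  "cube_params n d = {(D, a). D \<subseteq> {..<n} \<and> card D = d \<and> a \<in> hcube n \<and> (\<forall>i\<in>D. \<not> a i)}"

definition cube_point :: "(nat \<Rightarrow> bool) \<Rightarrow> nat set \<Rightarrow> nat \<Rightarrow> bool" where
  "cube_point a W i \<longleftrightarrow> a i \<or> i \<in> W"

lemma hcube_eq_image_Pow: "hcube n = (\<lambda>A i. i \<in> A) ` Pow {..<n}"
proof (rule set_eqI, rule iffI)
  fix x assume "x \<in> hcube n"
  then have "x = (\<lambda>i. i \<in> {i. i < n \<and> x i})"
    by (auto simp: hcube_def fun_eq_iff not_le[symmetric])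
  then show "x \<in> (\<lambda>A i. i \<in> A) ` Pow {..<n}" by blast
qed (auto simp: hcube_def)

lemma finite_hcube [simp]: "finite (hcube n)"
  by (simp add: hcube_eq_image_Pow)

lemma finite_cube_params [simp]: "finite (cube_params n d)"
proof (rule finite_subset)
  show "cube_params n d \<subseteq> Pow {..<n} \<times> hcube n"
    by (auto simp: cube_params_def)
qed simp

lemma card_cube_params: "card (cube_params n d) = (n choose d) * 2 ^ (n - d)"
proof -
  have "cube_params n d = (SIGMA D:{D. D \<subseteq> {..<n} \<and> card D = d}. (\<lambda>A i. i \<in> A) ` Pow ({..<n} - D))"
    by (auto simp: cube_params_def hcube_eq_image_Pow)
  moreover have "card ((\<lambda>A i. i \<in> A) ` Pow ({..<n} - D)) = 2 ^ (n - card D)" if "D \<subseteq> {..<n}" for D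
    using that by (subst card_image) (auto simp: inj_on_def fun_eq_iff card_Pow card_Diff_subset finite_subset)
  ultimately show ?thesis
    by (simp add: card_SigmaI n_subsets)
qed

lemma cube_eq_image_cube_point:
  assumes "(D, a) \<in> cube_params n d"
  shows "cube n (D, a) = cube_point a ` Pow D"
proof (rule set_eqI, rule iffI)
  fix x assume x: "x \<in> cube n (D, a)"
  have "x = cube_point a {i \<in> D. x i}"
    using x assms unfolding cube_def cube_params_def hcube_def cube_point_def
    by (auto simp: fun_eq_iff) (meson Diff_iff lessThan_iff not_le)+
  then show "x \<in> cube_point a ` Pow D" by blast
next
  fix x assume "x \<in> cube_point a ` Pow D"
  then obtain W where "W \<subseteq> D" "x = cube_point a W"
    by auto
  then show "x \<in> cube n (D, a)"
    using assms unfolding cube_def cube_params_def hcube_def cube_point_def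
    by auto
qed

lemma inj_on_cube_point: "\<forall>i\<in>D. \<not> a i \<Longrightarrow> inj_on (cube_point a) (Pow D)"
  by (auto simp: inj_on_def fun_eq_iff cube_point_def)

lemma card_Int_cube:
  assumes "(D, a) \<in> cube_params n d"
  shows "card (S \<inter> cube n (D, a)) = card {W \<in> Pow D. cube_point a W \<in> S}"
proof -
  have "S \<inter> cube n (D, a) = cube_point a ` {W \<in> Pow D. cube_point a W \<in> S}"
    using cube_eq_image_cube_point[OF assms] by auto
  moreover have "inj_on (cube_point a) {W \<in> Pow D. cube_point a W \<in> S}"
    using assms by (intro inj_on_subset[OF inj_on_cube_point[of D a]]) (auto simp: cube_params_def)
  ultimately show ?thesis
    by (simp only: card_image)
qed

lemma cube_params_recover:
  assumes "(D, a) \<in> cube_params n d"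
  shows "a = (\<lambda>i. \<forall>x\<in>cube n (D, a). x i)" and "D = {i. \<exists>x\<in>cube n (D, a). x i \<and> \<not> a i}"
proof -
  have vert: "cube n (D, a) = cube_point a ` Pow D"
    by (rule cube_eq_image_cube_point[OF assms])
  have base: "cube_point a {} \<in> cube n (D, a)"
    unfolding vert by blast
  show "a = (\<lambda>i. \<forall>x\<in>cube n (D, a). x i)"
  proof
    fix i
    show "a i = (\<forall>x\<in>cube n (D, a). x i)"
    proof
      assume "\<forall>x\<in>cube n (D, a). x i"
      then have "cube_point a {} i"
        using base by blast
      then show "a i"
        by (simp add: cube_point_def)
    qed (auto simp: vert cube_point_def)
  qed
  show "D = {i. \<exists>x\<in>cube n (D, a). x i \<and> \<not> a i}"
  proof (rule set_eqI, rule iffI)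
    fix i assume "i \<in> D"
    then have "cube_point a {i} \<in> cube n (D, a)" "\<not> a i"
      using assms unfolding vert by (auto simp: cube_params_def)
    then show "i \<in> {i. \<exists>x\<in>cube n (D, a). x i \<and> \<not> a i}"
      by (intro CollectI bexI[of _ "cube_point a {i}"]) (simp_all add: cube_point_def)
  next
    fix i assume "i \<in> {i. \<exists>x\<in>cube n (D, a). x i \<and> \<not> a i}"
    then show "i \<in> D"
      unfolding vert by (auto simp: cube_point_def)
  qed
qed

lemma inj_on_cube: "inj_on (cube n) (cube_params n d)"
proof (rule inj_onI)
  fix p q assume "p \<in> cube_params n d" "q \<in> cube_params n d" and eq: "cube n p = cube n q"
  then obtain D a D' a' where p: "p = (D, a)" "(D, a) \<in> cube_params n d"
    and q: "q = (D', a')" "(D', a') \<in> cube_params n d"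
    by (cases p, cases q) auto
  have "a = (\<lambda>i. \<forall>x\<in>cube n p. x i)"
    unfolding p by (rule cube_params_recover(1)[OF p(2)])
  also have "\<dots> = (\<lambda>i. \<forall>x\<in>cube n q. x i)"
    by (simp only: eq)
  also have "\<dots> = a'"
    unfolding q by (rule cube_params_recover(1)[OF q(2), symmetric])
  finally have "a = a'" .
  have "D = {i. \<exists>x\<in>cube n p. x i \<and> \<not> a i}"
    unfolding p by (rule cube_params_recover(2)[OF p(2)])
  also have "\<dots> = {i. \<exists>x\<in>cube n q. x i \<and> \<not> a' i}"
    by (simp only: eq \<open>a = a'\<close>)
  also have "\<dots> = D'"
    unfolding q by (rule cube_params_recover(2)[OF q(2), symmetric])
  finally show "p = q"
    using p q \<open>a = a'\<close> by simp
qed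

lemma subcubes_eq_image: "subcubes n d = cube n ` cube_params n d"
proof (rule set_eqI, rule iffI)
  fix C assume "C \<in> subcubes n d"
  then obtain D a where D: "D \<subseteq> {..<n}" "card D = d" "a \<in> hcube n" and C: "C = cube n (D, a)"
    by (auto simp: subcubes_def cube_def)
  then have "(D, \<lambda>i. a i \<and> i \<notin> D) \<in> cube_params n d" "C = cube n (D, \<lambda>i. a i \<and> i \<notin> D)"
    by (auto simp: cube_params_def hcube_def cube_def)
  then show "C \<in> cube n ` cube_params n d" by blast
next
  fix C assume "C \<in> cube n ` cube_params n d"
  then obtain D a where "(D, a) \<in> cube_params n d" "C = cube n (D, a)"
    by auto
  then show "C \<in> subcubes n d"
    unfolding subcubes_def cube_params_def cube_def by (intro CollectI exI[of _ D] exI[of _ a]) simp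
qed

lemma Lambda_S_eq_card_cube_params:
  "Lambda_S n S d s = card {p \<in> cube_params n d. card (S \<inter> cube n p) = s}"
proof -
  have "{C \<in> subcubes n d. card (S \<inter> C) = s} = cube n ` {p \<in> cube_params n d. card (S \<inter> cube n p) = s}"
    unfolding subcubes_eq_image by blast
  moreover have "inj_on (cube n) {p \<in> cube_params n d. card (S \<inter> cube n p) = s}"
    by (rule inj_on_subset[OF inj_on_cube]) blast
  ultimately show ?thesis
    unfolding Lambda_S_def by (simp only: card_image)
qed

lemma finite_Lambda_S_values: "finite {Lambda_S n S d s | S. S \<subseteq> hcube n}"
proof -
  have "{Lambda_S n S d s | S. S \<subseteq> hcube n} = (\<lambda>S. Lambda_S n S d s) ` Pow (hcube n)"
    by blast
  then show ?thesis
    by simp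
qed

lemma Lambda_S_le_Lambda: "S \<subseteq> hcube n \<Longrightarrow> Lambda_S n S d s \<le> Lambda n d s"
  unfolding Lambda_def by (rule Max_ge[OF finite_Lambda_S_values]) auto

lemma Lambda_attained:
  obtains S where "S \<subseteq> hcube n" "Lambda n d s = Lambda_S n S d s"
proof -
  have "Lambda n d s \<in> {Lambda_S n S d s | S. S \<subseteq> hcube n}"
    unfolding Lambda_def by (rule Max_in[OF finite_Lambda_S_values]) auto
  then show ?thesis
    using that by auto
qed

section \<open>Monotonicity of the density in \<open>n\<close>\<close>

text \<open>\<open>skip j\<close> enumerates the coordinates other than \<open>j\<close>, so \<open>x \<circ> skip j\<close> deletes coordinate \<open>j\<close>.\<close>

definition skip :: "nat \<Rightarrow> nat \<Rightarrow> nat" where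
  "skip j i = (if i < j then i else Suc i)"

lemma inj_skip: "inj (skip j)"
  by (auto simp: inj_on_def skip_def split: if_splits)

lemma range_skip: "range (skip j) = - {j}"
proof (rule set_eqI, rule iffI)
  fix i assume "i \<in> - {j}"
  then have "skip j (if i < j then i else i - 1) = i"
    by (auto simp: skip_def)
  then show "i \<in> range (skip j)"
    by (metis rangeI)
qed (auto simp: skip_def)

lemma skip_less_Suc_iff: "j \<le> n \<Longrightarrow> skip j i < Suc n \<longleftrightarrow> i < n"
  by (auto simp: skip_def)

lemma comp_skip_eqI: "x \<circ> skip j = y \<circ> skip j \<Longrightarrow> x j = y j \<Longrightarrow> x = y"
  by (metis ComplI comp_apply range_skip rangeE singletonD ext)

lemma hcube_comp_skip: "x \<in> hcube (Suc n) \<Longrightarrow> j \<le> n \<Longrightarrow> x \<circ> skip j \<in> hcube n"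
  by (auto simp: hcube_def skip_def)

lemma cube_params_delete_coord:
  assumes "(D, a) \<in> cube_params (Suc n) d" "j \<le> n" "j \<notin> D"
  shows "(skip j -` D, a \<circ> skip j) \<in> cube_params n d"
proof -
  have D: "D \<subseteq> {..<Suc n}" "card D = d" "a \<in> hcube (Suc n)" "\<forall>i\<in>D. \<not> a i"
    using assms(1) by (auto simp: cube_params_def)
  have "skip j ` (skip j -` D) = D"
    using assms(3) by (auto simp: image_vimage_eq range_skip)
  then have "card (skip j -` D) = d"
    using D(2) card_image[OF inj_on_subset[OF inj_skip subset_UNIV]] by metis
  moreover have "skip j -` D \<subseteq> {..<n}"
    using D(1) skip_less_Suc_iff[OF assms(2)] by auto
  ultimately show ?thesis
    using D(3,4) hcube_comp_skip[OF D(3) assms(2)] by (simp add: cube_params_def)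
qed

lemma cube_delete_coord:
  assumes S: "S \<subseteq> hcube (Suc n)" and p: "(D, a) \<in> cube_params (Suc n) d" and j: "j \<le> n" "j \<notin> D"
  shows "(\<lambda>x. x \<circ> skip j) ` {x \<in> S. x j = a j} \<inter> cube n (skip j -` D, a \<circ> skip j)
    = (\<lambda>x. x \<circ> skip j) ` (S \<inter> cube (Suc n) (D, a))"
proof (rule set_eqI, rule iffI)
  fix y assume "y \<in> (\<lambda>x. x \<circ> skip j) ` {x \<in> S. x j = a j} \<inter> cube n (skip j -` D, a \<circ> skip j)"
  then obtain x where x: "x \<in> S" "x j = a j" "y = x \<circ> skip j"
    and y: "\<forall>i\<in>{..<n} - skip j -` D. y i = a (skip j i)"
    by (auto simp: cube_def)
  have "x i = a i" if "i \<in> {..<Suc n} - D" for i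
  proof (cases "i = j")
    case False
    then obtain k where "i = skip j k"
      using range_skip by blast
    then show ?thesis
      using that y x(3) skip_less_Suc_iff[OF j(1)] by auto
  qed (use x in simp)
  then have "x \<in> cube (Suc n) (D, a)"
    using x S by (auto simp: cube_def)
  then show "y \<in> (\<lambda>x. x \<circ> skip j) ` (S \<inter> cube (Suc n) (D, a))"
    using x by blast
next
  fix y assume "y \<in> (\<lambda>x. x \<circ> skip j) ` (S \<inter> cube (Suc n) (D, a))"
  then obtain x where x: "x \<in> S" "x \<in> cube (Suc n) (D, a)" "y = x \<circ> skip j"
    by blast
  then have "x j = a j"
    using j by (auto simp: cube_def)
  moreover have "y \<in> cube n (skip j -` D, a \<circ> skip j)"
    using x S hcube_comp_skip[OF _ j(1)] skip_less_Suc_iff[OF j(1)] by (auto simp: cube_def)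
  ultimately show "y \<in> (\<lambda>x. x \<circ> skip j) ` {x \<in> S. x j = a j} \<inter> cube n (skip j -` D, a \<circ> skip j)"
    using x by blast
qed

lemma inj_on_delete_coord:
  "inj_on (\<lambda>p. (skip j -` fst p, snd p \<circ> skip j)) {p. j \<notin> fst p \<and> snd p j = b}"
proof (rule inj_onI)
  fix p q assume "p \<in> {p. j \<notin> fst p \<and> snd p j = b}" "q \<in> {p. j \<notin> fst p \<and> snd p j = b}"
    and eq: "(skip j -` fst p, snd p \<circ> skip j) = (skip j -` fst q, snd q \<circ> skip j)"
  moreover obtain D a D' a' where "p = (D, a)" "q = (D', a')"
    by (cases p, cases q) auto
  ultimately have "j \<notin> D" "j \<notin> D'" "a j = a' j"
    and vimage_eq: "skip j -` D = skip j -` D'" and comp_eq: "a \<circ> skip j = a' \<circ> skip j"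
    by auto
  have "D = skip j ` (skip j -` D)" "D' = skip j ` (skip j -` D')"
    using \<open>j \<notin> D\<close> \<open>j \<notin> D'\<close> by (auto simp: image_vimage_eq range_skip)
  with vimage_eq have "D = D'"
    by simp
  moreover have "a = a'"
    using comp_eq \<open>a j = a' j\<close> by (rule comp_skip_eqI)
  ultimately show "p = q"
    using \<open>p = (D, a)\<close> \<open>q = (D', a')\<close> by simp
qed

lemma card_Int_cube_delete_coord:
  assumes S: "S \<subseteq> hcube (Suc n)" and p: "(D, a) \<in> cube_params (Suc n) d" and j: "j \<le> n" "j \<notin> D"
  shows "card ((\<lambda>x. x \<circ> skip j) ` {x \<in> S. x j = a j} \<inter> cube n (skip j -` D, a \<circ> skip j))
    = card (S \<inter> cube (Suc n) (D, a))"
proof -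
  have coord_j: "x j = a j" if "x \<in> cube (Suc n) (D, a)" for x
    using that j by (simp add: cube_def)
  have "inj_on (\<lambda>x. x \<circ> skip j) (S \<inter> cube (Suc n) (D, a))"
  proof (rule inj_onI)
    fix x y assume "x \<in> S \<inter> cube (Suc n) (D, a)" "y \<in> S \<inter> cube (Suc n) (D, a)"
      and "x \<circ> skip j = y \<circ> skip j"
    then show "x = y"
      using coord_j by (intro comp_skip_eqI[of x j y]) auto
  qed
  then show ?thesis
    using cube_delete_coord[OF S p j] by (simp add: card_image)
qed

lemma card_cube_params_fixing_coord_le:
  assumes S: "S \<subseteq> hcube (Suc n)" and j: "j \<le> n"
  shows "card {p \<in> cube_params (Suc n) d. j \<notin> fst p \<and> snd p j = b \<and> card (S \<inter> cube (Suc n) p) = s}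
    \<le> Lambda n d s"
    (is "card ?P \<le> _")
proof -
  define S' where "S' = (\<lambda>x. x \<circ> skip j) ` {x \<in> S. x j = b}"
  define delete where "delete = (\<lambda>p :: nat set \<times> (nat \<Rightarrow> bool). (skip j -` fst p, snd p \<circ> skip j))"
  have "inj_on delete ?P"
    unfolding delete_def by (rule inj_on_subset[OF inj_on_delete_coord[of j b]]) blast
  moreover have "delete ` ?P \<subseteq> {q \<in> cube_params n d. card (S' \<inter> cube n q) = s}"
  proof (rule image_subsetI)
    fix p assume "p \<in> ?P"
    then obtain D a where p: "p = (D, a)" "(D, a) \<in> cube_params (Suc n) d" "j \<notin> D" "a j = b"
      and s: "card (S \<inter> cube (Suc n) (D, a)) = s"
      by (cases p) auto
    then show "delete p \<in> {q \<in> cube_params n d. card (S' \<inter> cube n q) = s}"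
      using cube_params_delete_coord[OF p(2) j p(3)] card_Int_cube_delete_coord[OF S p(2) j p(3)]
      by (simp add: delete_def S'_def)
  qed
  ultimately have "card ?P \<le> card {q \<in> cube_params n d. card (S' \<inter> cube n q) = s}"
    by (intro card_inj_on_le) simp_all
  also have "\<dots> = Lambda_S n S' d s"
    by (simp add: Lambda_S_eq_card_cube_params)
  also have "\<dots> \<le> Lambda n d s"
    using S j by (intro Lambda_S_le_Lambda) (auto simp: S'_def hcube_comp_skip)
  finally show ?thesis .
qed

lemma Lambda_Suc_le: "(Suc n - d) * Lambda (Suc n) d s \<le> 2 * Suc n * Lambda n d s"
proof -
  obtain S where S: "S \<subseteq> hcube (Suc n)" "Lambda (Suc n) d s = Lambda_S (Suc n) S d s"
    by (rule Lambda_attained)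
  define G where "G = {p \<in> cube_params (Suc n) d. card (S \<inter> cube (Suc n) p) = s}"
  have fixed_coords: "card {j \<in> {..<Suc n}. j \<notin> fst p} = Suc n - d" if "p \<in> G" for p
  proof -
    have "fst p \<subseteq> {..<Suc n}" "card (fst p) = d"
      using that by (auto simp: G_def cube_params_def)
    moreover have "{j \<in> {..<Suc n}. j \<notin> fst p} = {..<Suc n} - fst p"
      by auto
    ultimately show ?thesis
      by (simp add: card_Diff_subset finite_subset)
  qed
  have "(Suc n - d) * Lambda (Suc n) d s = (\<Sum>j<Suc n. card {p \<in> G. j \<notin> fst p})"
    using S(2) sum_multicount[of "{..<Suc n}" G "\<lambda>j p. j \<notin> fst p" "Suc n - d"] fixed_coords
    by (simp add: Lambda_S_eq_card_cube_params G_def[symmetric]) (simp add: G_def)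
  also have "\<dots> \<le> (\<Sum>j<Suc n. 2 * Lambda n d s)"
  proof (rule sum_mono)
    fix j assume "j \<in> {..<Suc n}"
    moreover have "{p \<in> G. j \<notin> fst p \<and> snd p j = b}
        = {p \<in> cube_params (Suc n) d. j \<notin> fst p \<and> snd p j = b \<and> card (S \<inter> cube (Suc n) p) = s}" for b
      unfolding G_def by blast
    ultimately have half: "card {p \<in> G. j \<notin> fst p \<and> snd p j = b} \<le> Lambda n d s" for b
      using card_cube_params_fixing_coord_le[OF S(1), of j d b s] by simp
    have "{p \<in> G. j \<notin> fst p}
        = {p \<in> G. j \<notin> fst p \<and> snd p j = True} \<union> {p \<in> G. j \<notin> fst p \<and> snd p j = False}"
      by auto
    then have "card {p \<in> G. j \<notin> fst p}
        \<le> card {p \<in> G. j \<notin> fst p \<and> snd p j = True} + card {p \<in> G. j \<notin> fst p \<and> snd p j = False}"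
      by (simp only: card_Un_le)
    with half[of True] half[of False] show "card {p \<in> G. j \<notin> fst p} \<le> 2 * Lambda n d s"
      by linarith
  qed
  finally show ?thesis
    by simp
qed

lemma Lambda_density_Suc_le:
  assumes "d \<le> n"
  shows "Lambda (Suc n) d s / (real (Suc n choose d) * 2 ^ (Suc n - d))
    \<le> Lambda n d s / (real (n choose d) * 2 ^ (n - d))"
proof -
  have "Lambda (Suc n) d s * (n choose d) * Suc n = Lambda (Suc n) d s * ((Suc n - d) * (Suc n choose d))"
    using binomial_absorb_comp[of "Suc n" d] by (simp add: algebra_simps)
  also have "\<dots> \<le> 2 * Suc n * Lambda n d s * (Suc n choose d)"
    using Lambda_Suc_le[of n d s] by (simp add: mult.assoc mult.left_commute)
  also have "\<dots> = 2 * Lambda n d s * (Suc n choose d) * Suc n"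
    by (simp only: ac_simps)
  finally have "Lambda (Suc n) d s * (n choose d) \<le> 2 * Lambda n d s * (Suc n choose d)"
    by (subst (asm) mult_le_cancel2) simp
  then have "real (Lambda (Suc n) d s) * (n choose d) \<le> 2 * real (Lambda n d s) * (Suc n choose d)"
    by (metis of_nat_le_iff of_nat_mult of_nat_numeral)
  moreover have "(2::real) ^ (Suc n - d) = 2 * 2 ^ (n - d)"
    using assms by (simp add: Suc_diff_le)
  moreover have "0 < real (n choose d)" "0 < real (Suc n choose d)"
    using assms by simp_all
  ultimately show ?thesis
    by (simp add: field_simps)
qed

lemma lim_ge_if_eventually_decreasing:
  fixes X :: "nat \<Rightarrow> real"
  assumes decreasing: "\<And>n. m \<le> n \<Longrightarrow> X (Suc n) \<le> X n" and bound: "\<And>n. m \<le> n \<Longrightarrow> b \<le> X n"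
  shows "b \<le> lim X"
proof -
  have "decseq (\<lambda>n. X (n + m))"
    by (rule decseq_SucI) (simp add: decreasing)
  moreover have "\<forall>n. b \<le> X (n + m)"
    using bound by simp
  ultimately obtain L where "(\<lambda>n. X (n + m)) \<longlonglongrightarrow> L"
    using decseq_convergent by blast
  then have "X \<longlonglongrightarrow> L"
    by (rule LIMSEQ_offset)
  moreover have "\<exists>N. \<forall>n\<ge>N. b \<le> X n"
    using bound by blast
  ultimately show ?thesis
    by (simp add: limI LIMSEQ_le_const)
qed

section \<open>The space \<open>F\<^sub>2\<^sup>3\<close> and its characters\<close>

lemma UNIV_bit: "(UNIV :: bit set) = {0, 1}"
  by (auto intro: bit.exhaust)

instance bit :: finite
  by standard (simp add: UNIV_bit)

type_synonym vec3 = "bit \<times> bit \<times> bit"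

lemma vec3_add_self [simp]: "x + x = (0 :: vec3)"
  by (simp add: zero_prod_def prod_eq_iff)

lemma UNIV_vec3:
  "(UNIV :: vec3 set) = {(0,0,0), (0,0,1), (0,1,0), (0,1,1), (1,0,0), (1,0,1), (1,1,0), (1,1,1)}"
  by (simp only: UNIV_bit flip: UNIV_Times_UNIV) auto

lemma vec3_add_eq_0_iff: "x + y = 0 \<longleftrightarrow> x = (y :: vec3)"
proof
  assume "x + y = 0"
  have "x = (x + y) + y" by (simp add: add.assoc)
  with \<open>x + y = 0\<close> show "x = y" by simp
qed simp

definition dot3 :: "vec3 \<Rightarrow> vec3 \<Rightarrow> bit" where
  "dot3 c x = fst c * fst x + fst (snd c) * fst (snd x) + snd (snd c) * snd (snd x)"

lemma dot3_commute: "dot3 c x = dot3 x c"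
  by (simp add: dot3_def mult.commute del: add_bit_eq_xor mult_bit_eq_and)

lemma dot3_add: "dot3 c (x + y) = dot3 c x + dot3 c y"
  by (simp add: dot3_def distrib_left del: add_bit_eq_xor mult_bit_eq_and)

lemma dot3_zero [simp]: "dot3 c 0 = 0" "dot3 0 c = 0"
  by (simp_all add: dot3_def)

definition chi :: "vec3 \<Rightarrow> vec3 \<Rightarrow> int" where
  "chi c x = (if dot3 c x = 0 then 1 else -1)"

lemma chi_zero [simp]: "chi c 0 = 1" "chi 0 x = 1"
  by (simp_all add: chi_def)

lemma chi_add: "chi c (x + y) = chi c x * chi c y"
  unfolding chi_def dot3_add by (cases "dot3 c x"; cases "dot3 c y") simp_all

lemma chi_sum: "finite W \<Longrightarrow> chi c (sum v W) = (\<Prod>i\<in>W. chi c (v i))"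
  by (induction W rule: finite_induct) (simp_all add: chi_add)

lemma sum_chi: "(\<Sum>c\<in>UNIV. chi c x) = (if x = 0 then 8 else 0)"
proof -
  obtain a b e where "x = (a, b, e)" by (cases x) auto
  then show ?thesis
    by (cases a; cases b; cases e) (simp_all add: UNIV_vec3 chi_def dot3_def zero_prod_def)
qed

lemma card_orthogonal:
  assumes "c \<noteq> 0"
  shows "card {x. dot3 c x = 0} = 4"
proof -
  obtain a b e where c: "c = (a, b, e)" by (cases c) auto
  have "card {x. dot3 c x = 0} = (\<Sum>x\<in>UNIV. if dot3 c x = 0 then 1 else 0)"
    by (simp add: sum.If_cases)
  also have "\<dots> = 4"
    using assms unfolding c
    by (cases a; cases b; cases e) (simp_all add: UNIV_vec3 dot3_def zero_prod_def)
  finally show ?thesis .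
qed

text \<open>Dual form of: \<open>v ` D\<close> spans \<open>F\<^sub>2\<^sup>3\<close>.\<close>

definition spans :: "(nat \<Rightarrow> vec3) \<Rightarrow> nat set \<Rightarrow> bool" where
  "spans v D \<longleftrightarrow> (\<forall>c. c \<noteq> 0 \<longrightarrow> (\<exists>i\<in>D. dot3 c (v i) \<noteq> 0))"

text \<open>Fourier inversion: \<open>8 [x = t] = (\<Sum>c. chi c (x + t))\<close>, and
  \<open>(\<Sum>W\<subseteq>D. \<Prod>i\<in>W. chi c (v i)) = (\<Prod>i\<in>D. chi c (v i) + 1)\<close> vanishes for \<open>c \<noteq> 0\<close>
  because some \<open>v i\<close> has \<open>chi c (v i) = -1\<close>.\<close>

lemma card_subsets_with_sum:
  fixes v :: "nat \<Rightarrow> vec3"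
  assumes "finite D" "spans v D"
  shows "8 * card {W \<in> Pow D. sum v W = t} = 2 ^ card D"
proof -
  have annihilated: "(\<Prod>i\<in>D. chi c (v i) + 1) = 0" if "c \<noteq> 0" for c
  proof -
    obtain i where "i \<in> D" "dot3 c (v i) \<noteq> 0"
      using assms(2) \<open>c \<noteq> 0\<close> unfolding spans_def by blast
    then show ?thesis
      using assms(1) by (intro prod_zero) (auto simp: chi_def)
  qed
  have "int (8 * card {W \<in> Pow D. sum v W = t}) = (\<Sum>W\<in>Pow D. if sum v W = t then 8 else 0)"
    using assms(1) by (simp flip: sum.inter_filter)
  also have "\<dots> = (\<Sum>W\<in>Pow D. \<Sum>c\<in>UNIV. chi c (sum v W + t))"
    by (simp add: sum_chi vec3_add_eq_0_iff)
  also have "\<dots> = (\<Sum>c\<in>UNIV. chi c t * (\<Sum>W\<in>Pow D. \<Prod>i\<in>W. chi c (v i)))"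
    using assms(1) by (simp add: chi_add chi_sum finite_subset sum_distrib_left mult.commute
        sum.swap[of _ "Pow D"])
  also have "\<dots> = (\<Sum>c\<in>UNIV. chi c t * (\<Prod>i\<in>D. chi c (v i) + 1))"
    using assms(1) by (simp add: prod_add)
  also have "\<dots> = chi 0 t * (\<Prod>i\<in>D. chi 0 (v i) + 1)"
    using annihilated by (subst sum.remove[of UNIV 0]) simp_all
  also have "\<dots> = int (2 ^ card D)"
    by simp
  finally show ?thesis
    by (simp only: of_nat_eq_iff)
qed

section \<open>The construction\<close>

definition zero_sum_set :: "nat \<Rightarrow> (nat \<Rightarrow> vec3) \<Rightarrow> (nat \<Rightarrow> bool) set" where
  "zero_sum_set n v = {x \<in> hcube n. sum v {i. i < n \<and> x i} = 0}"

lemma card_zero_sum_set_Int_cube: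
  assumes p: "(D, a) \<in> cube_params n d" and "spans v D"
  shows "8 * card (zero_sum_set n v \<inter> cube n (D, a)) = 2 ^ d"
proof -
  define A where "A = {i. i < n \<and> a i}"
  have D: "D \<subseteq> {..<n}" "card D = d" "\<forall>i\<in>D. \<not> a i"
    using p by (auto simp: cube_params_def)
  have point_iff: "cube_point a W \<in> zero_sum_set n v \<longleftrightarrow> sum v W = sum v A" if "W \<subseteq> D" for W
  proof -
    have "{i. i < n \<and> cube_point a W i} = A \<union> W" "A \<inter> W = {}"
      using that D by (auto simp: A_def cube_point_def)
    moreover have "finite W"
      using that D(1) by (simp add: finite_subset)
    ultimately have "sum v {i. i < n \<and> cube_point a W i} = sum v W + sum v A"
      by (simp add: A_def sum.union_disjoint add.commute)
    moreover have "cube_point a W \<in> cube n (D, a)"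
      unfolding cube_eq_image_cube_point[OF p] using that by (intro imageI) simp
    ultimately show ?thesis
      by (simp add: zero_sum_set_def cube_def vec3_add_eq_0_iff)
  qed
  have "{W \<in> Pow D. cube_point a W \<in> zero_sum_set n v} = {W \<in> Pow D. sum v W = sum v A}"
    using point_iff by blast
  moreover have "finite D"
    using D(1) by (simp add: finite_subset)
  ultimately show ?thesis
    using card_subsets_with_sum[of D v "sum v A"] assms(2) D(2) by (simp add: card_Int_cube[OF p])
qed

lemma card_nonzero_vec3: "card (- {0 :: vec3}) = 7"
proof -
  have "card (UNIV :: vec3 set) = 8"
    by (simp add: UNIV_vec3)
  then show ?thesis
    by (simp add: Compl_eq_Diff_UNIV card_Diff_singleton)
qed

definition labellings :: "nat \<Rightarrow> (nat \<Rightarrow> vec3) set" where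
  "labellings n = {..<n} \<rightarrow>\<^sub>E - {0}"

lemma finite_labellings [simp]: "finite (labellings n)"
  by (simp add: labellings_def finite_PiE)

lemma card_labellings: "card (labellings n) = 7 ^ n"
  by (simp add: labellings_def card_funcsetE card_nonzero_vec3)

lemma card_PiE_if:
  assumes "finite I" "D \<subseteq> I"
  shows "card (\<Pi>\<^sub>E i\<in>I. if i \<in> D then A else B) = card A ^ card D * card B ^ (card I - card D)"
proof -
  have "card (\<Pi>\<^sub>E i\<in>I. if i \<in> D then A else B) = (\<Prod>i\<in>I. if i \<in> D then card A else card B)"
    using assms(1) by (simp add: card_PiE if_distrib)
  also have "\<dots> = card A ^ card (I \<inter> D) * card B ^ card (I - D)"
    using assms(1) by (simp add: prod.If_cases Diff_eq)
  also have "\<dots> = card A ^ card D * card B ^ (card I - card D)"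
    using assms by (simp add: Int_absorb1 card_Diff_subset finite_subset)
  finally show ?thesis .
qed

definition annihilators :: "(nat \<Rightarrow> vec3) \<Rightarrow> nat set \<Rightarrow> vec3 set" where
  "annihilators v D = {c \<in> - {0}. \<forall>i\<in>D. dot3 c (v i) = 0}"

lemma sum_card_annihilators:
  assumes "D \<subseteq> {..<n}"
  shows "(\<Sum>v\<in>labellings n. card (annihilators v D)) = 7 * 3 ^ card D * 7 ^ (n - card D)"
proof -
  have "card {v \<in> labellings n. \<forall>i\<in>D. dot3 c (v i) = 0} = 3 ^ card D * 7 ^ (n - card D)" if "c \<noteq> 0" for c
  proof -
    have "{v \<in> labellings n. \<forall>i\<in>D. dot3 c (v i) = 0}
        = (\<Pi>\<^sub>E i\<in>{..<n}. if i \<in> D then {x. dot3 c x = 0} - {0} else - {0})"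
      using assms by (auto simp: labellings_def PiE_def Pi_def split: if_splits)
    then show ?thesis
      using assms that by (simp add: card_PiE_if card_nonzero_vec3 card_orthogonal)
  qed
  then show ?thesis
    using sum_multicount[of "labellings n" "- {0}" "\<lambda>v c. \<forall>i\<in>D. dot3 c (v i) = 0"
        "3 ^ card D * 7 ^ (n - card D)"]
    by (simp add: annihilators_def card_nonzero_vec3 mult.commute)
qed

lemma card_labellings_constant_on:
  assumes D: "D \<subseteq> {..<n}" "D \<noteq> {}"
  shows "card {v \<in> labellings n. v constant_on D} = 7 * 7 ^ (n - card D)"
proof -
  define C where "C u = (\<Pi>\<^sub>E i\<in>{..<n}. if i \<in> D then {u} else - {0 :: vec3})" for u
  obtain i where "i \<in> D"
    using D(2) by blast
  have "{v \<in> labellings n. v constant_on D} = (\<Union>u\<in>- {0}. C u)"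
  proof (rule set_eqI, rule iffI)
    fix v assume "v \<in> {v \<in> labellings n. v constant_on D}"
    then obtain u where v: "v \<in> labellings n" "\<forall>i\<in>D. v i = u"
      unfolding constant_on_def by blast
    with \<open>i \<in> D\<close> have "u \<noteq> 0"
      using D(1) by (auto simp: labellings_def)
    with v show "v \<in> (\<Union>u\<in>- {0}. C u)"
      by (intro UN_I[of u]) (auto simp: C_def labellings_def PiE_def Pi_def)
  next
    fix v assume "v \<in> (\<Union>u\<in>- {0}. C u)"
    then obtain u where "u \<noteq> 0" "v \<in> C u"
      by blast
    then show "v \<in> {v \<in> labellings n. v constant_on D}"
      using D(1) unfolding labellings_def C_def constant_on_def
      by (intro CollectI conjI exI[of _ u]) (auto simp: PiE_def Pi_def split: if_splits)
  qed
  also have "card (\<Union>u\<in>- {0}. C u) = (\<Sum>u\<in>- {0}. card (C u))"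
  proof (rule card_UN_disjoint)
    show "\<forall>u\<in>- {0}. \<forall>u'\<in>- {0}. u \<noteq> u' \<longrightarrow> C u \<inter> C u' = {}"
      using \<open>i \<in> D\<close> D(1) by (auto simp: C_def PiE_def Pi_def)
  qed (auto simp: C_def intro: finite_PiE)
  also have "\<dots> = 7 * 7 ^ (n - card D)"
    using D(1) by (simp add: C_def card_PiE_if card_nonzero_vec3)
  finally show ?thesis .
qed

lemma card_annihilators_ge:
  assumes v: "v \<in> labellings n" and D: "D \<subseteq> {..<n}" "D \<noteq> {}"
  shows "of_bool (\<not> spans v D) + 2 * of_bool (v constant_on D) \<le> card (annihilators v D)"
proof (cases "v constant_on D")
  case True
  then obtain u where u: "\<forall>i\<in>D. v i = u"
    unfolding constant_on_def by blast
  moreover obtain i where "i \<in> D"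
    using D(2) by blast
  ultimately have "u \<noteq> 0"
    using v D(1) by (auto simp: labellings_def)
  moreover have "annihilators v D = {c. dot3 u c = 0} - {0}"
    using u D(2) by (auto simp: annihilators_def dot3_commute)
  ultimately have "card (annihilators v D) = 3"
    by (simp add: card_orthogonal)
  then show ?thesis
    using True by simp
next
  case False
  have "annihilators v D \<noteq> {}" if "\<not> spans v D"
  proof -
    have "\<exists>c. c \<noteq> 0 \<and> (\<forall>i\<in>D. dot3 c (v i) = 0)"
      using that by (simp add: spans_def)
    then obtain c where "c \<noteq> 0" "\<forall>i\<in>D. dot3 c (v i) = 0"
      by blast
    then have "c \<in> annihilators v D"
      unfolding annihilators_def by blast
    then show ?thesis
      by blast
  qed
  then show ?thesis
    using False by (cases "spans v D") (simp_all add: Suc_le_eq card_gt_0_iff)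
qed

lemma card_nonspanning_labellings:
  assumes "D \<subseteq> {..<n}" "D \<noteq> {}"
  shows "card {v \<in> labellings n. \<not> spans v D} + 14 * 7 ^ (n - card D) \<le> 7 * 3 ^ card D * 7 ^ (n - card D)"
proof -
  have "card {v \<in> labellings n. \<not> spans v D} + 2 * card {v \<in> labellings n. v constant_on D}
      = (\<Sum>v\<in>labellings n. of_bool (\<not> spans v D) + 2 * of_bool (v constant_on D))"
    by (simp add: sum.distrib Collect_conj_eq flip: sum_distrib_left)
  also have "\<dots> \<le> (\<Sum>v\<in>labellings n. card (annihilators v D))"
    using assms by (intro sum_mono card_annihilators_ge)
  finally show ?thesis
    using assms by (simp add: sum_card_annihilators card_labellings_constant_on)
qed

lemma card_spanning_labellings_ge:
  assumes "D \<subseteq> {..<n}" "D \<noteq> {}"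
  shows "7 ^ n - (7 * 3 ^ card D - 14) * 7 ^ (n - card D) \<le> real (card {v \<in> labellings n. spans v D})"
proof -
  have "card (labellings n) = card ({v \<in> labellings n. spans v D} \<union> {v \<in> labellings n. \<not> spans v D})"
    by (rule arg_cong[where f = card]) auto
  then have partition: "card {v \<in> labellings n. spans v D} + card {v \<in> labellings n. \<not> spans v D} = 7 ^ n"
    by (simp add: card_Un_disjoint disjoint_iff card_labellings)
  have "real (card {v \<in> labellings n. spans v D}) + card {v \<in> labellings n. \<not> spans v D} = 7 ^ n"
    using arg_cong[where f = real, OF partition] by simp
  moreover have "real (card {v \<in> labellings n. \<not> spans v D}) + 14 * 7 ^ (n - card D)
      \<le> 7 * 3 ^ card D * 7 ^ (n - card D)"
    using of_nat_mono[where 'a = real, OF card_nonspanning_labellings[OF assms]] by simp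
  ultimately show ?thesis
    by (simp add: algebra_simps)
qed

lemma card_spanning_cube_params_le_Lambda:
  assumes "3 \<le> d"
  shows "card {p \<in> cube_params n d. spans v (fst p)} \<le> Lambda n d (2 ^ (d - 3))"
proof -
  have "card (zero_sum_set n v \<inter> cube n p) = 2 ^ (d - 3)" if "p \<in> cube_params n d" "spans v (fst p)" for p
  proof -
    have "(2::nat) ^ d = 2 ^ (3 + (d - 3))"
      using assms by simp
    then have "8 * card (zero_sum_set n v \<inter> cube n p) = 8 * 2 ^ (d - 3)"
      using card_zero_sum_set_Int_cube[of "fst p" "snd p" n d v] that by (simp add: power_add)
    then show ?thesis
      by simp
  qed
  then have "card {p \<in> cube_params n d. spans v (fst p)} \<le> Lambda_S n (zero_sum_set n v) d (2 ^ (d - 3))"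
    unfolding Lambda_S_eq_card_cube_params by (intro card_mono) auto
  also have "\<dots> \<le> Lambda n d (2 ^ (d - 3))"
    by (rule Lambda_S_le_Lambda) (auto simp: zero_sum_set_def)
  finally show ?thesis .
qed

lemma Lambda_lower_bound:
  assumes "3 \<le> d" "d \<le> n"
  shows "(1 - (3 ^ d - 2) / 7 ^ (d - 1)) * card (cube_params n d) \<le> real (Lambda n d (2 ^ (d - 3)))"
proof -
  define P where "P = cube_params n d"
  define L where "L = Lambda n d (2 ^ (d - 3))"
  define K :: real where "K = 7 ^ (d - 1)"
  define r :: real where "r = 7 ^ (n - d)"
  have "7 ^ n - (7 * 3 ^ d - 14) * r \<le> card {v \<in> labellings n. spans v (fst p)}" if "p \<in> P" for p
  proof -
    have "fst p \<subseteq> {..<n}" "fst p \<noteq> {}" "card (fst p) = d"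
      using that assms(1) by (auto simp: P_def cube_params_def)
    then show ?thesis
      using card_spanning_labellings_ge[of "fst p" n] by (simp add: r_def)
  qed
  then have "(7 ^ n - (7 * 3 ^ d - 14) * r) * card P \<le> (\<Sum>p\<in>P. real (card {v \<in> labellings n. spans v (fst p)}))"
    using sum_mono[of P "\<lambda>_. 7 ^ n - (7 * 3 ^ d - 14) * r"] by (simp add: mult.commute)
  also have "\<dots> = (\<Sum>v\<in>labellings n. real (card {p \<in> P. spans v (fst p)}))"
    using sum_multicount_gen[of P "labellings n" "\<lambda>p v. spans v (fst p)"] by (simp add: P_def flip: of_nat_sum)
  also have "\<dots> \<le> 7 ^ n * L"
    using sum_bounded_above[of "labellings n" "\<lambda>v. real (card {p \<in> P. spans v (fst p)})" L]
      card_spanning_cube_params_le_Lambda[OF assms(1)]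
    by (simp add: P_def L_def card_labellings)
  finally have "(7 ^ n - (7 * 3 ^ d - 14) * r) * card P \<le> 7 ^ n * L" .
  moreover have "(7::real) ^ n = 7 * r * K"
    using assms by (simp add: r_def K_def flip: power_add power_Suc)
  ultimately have "7 * r * ((K - (3 ^ d - 2)) * card P) \<le> 7 * r * (L * K)"
    by (simp add: algebra_simps)
  then have "(K - (3 ^ d - 2)) * card P \<le> L * K"
    by (rule mult_left_le_imp_le) (simp add: r_def)
  moreover have "K > 0"
    by (simp add: K_def)
  ultimately have "(1 - (3 ^ d - 2) / K) * card P \<le> L"
    by (simp add: field_simps)
  then show ?thesis
    unfolding P_def L_def K_def .
qed

theorem mainTheorem5:
  fixes d :: nat
  assumes "d \<ge> 3"
  shows "lambda_dens d (2 ^ (d - 3)) \<ge> 1 - (3 ^ d - 2) / 7 ^ (d - 1)"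
proof -
  define X where "X = (\<lambda>n. real (Lambda n d (2 ^ (d - 3))) / (real (n choose d) * 2 ^ (n - d)))"
  have "X (Suc n) \<le> X n" if "d \<le> n" for n
    unfolding X_def by (rule Lambda_density_Suc_le[OF that])
  moreover have "1 - (3 ^ d - 2) / 7 ^ (d - 1) \<le> X n" if "d \<le> n" for n
    using Lambda_lower_bound[OF assms that] that
    by (simp add: X_def card_cube_params pos_le_divide_eq)
  ultimately have "1 - (3 ^ d - 2) / 7 ^ (d - 1) \<le> lim X"
    by (rule lim_ge_if_eventually_decreasing)
  then show ?thesis
    unfolding lambda_dens_def X_def .
qed

end
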